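(* Let $(X,\mathcal{A},\mu,T)$ be an ergodic probability-preserving system and let $(E_k)_{k\geq1}$ be a sequence in $\mathcal{A}$ (with $\mu(E_k)>0$, so that the hitting times below are defined). Then the following are equivalent: (a) $\mu(E_k)\to0$ as $k\to\infty$; (b) $\nu(E_k)\to0$ as $k\to\infty$ for all probability measures $\nu\ll\mu$ on $(X,\mathcal{A})$; (c) $\varphi_{E_k}\to\infty$ in $\mu$-measure as $k\to\infty$; (d) $\varphi_{E_k}\to\infty$ in $\nu$-measure as $k\to\infty$ for all probability measures $\nu\ll\mu$; (e) $\varphi_{E_k}\to\infty$ in $\nu$-measure as $k\to\infty$ for some probability measure $\nu\ll\mu$.
   Context: A measure preserving transformation $T$ of a probability space $(X,\mathcal{A},\mu)$ is a measurable map $T:X\to X$ with $\mu\circ T^{-1}=\mu$; it may be non-invertible. For $Y\in\mathcal{A}$ with $\mu(Y)>0$, the first hitting time is $\varphi_Y(x):=\min\{n\geq1: T^n x\in Y\}\in\mathbb{N}\cup\{\infty\}$. "$\varphi_{E_k}\to\infty$ in $\nu$-measure" means $\nu(\varphi_{E_k}\leq N)\to0$ as $k\to\infty$ for every $N\geq1$. *)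

theory Defs
  imports "HOL-Probability.Probability"
begin

definition mpt :: "'a measure \<Rightarrow> ('a \<Rightarrow> 'a) \<Rightarrow> bool" where
  "mpt M T \<longleftrightarrow> T \<in> measurable M M \<and> distr M M T = M"

definition ergodic_mpt :: "'a measure \<Rightarrow> ('a \<Rightarrow> 'a) \<Rightarrow> bool" where
  "ergodic_mpt M T \<longleftrightarrow> mpt M T \<and>
     (\<forall>A \<in> sets M. T -` A \<inter> space M = A \<longrightarrow> measure M A = 0 \<or> measure M A = 1)"

definition hitting_time :: "('a \<Rightarrow> 'a) \<Rightarrow> 'a set \<Rightarrow> 'a \<Rightarrow> enat" where
  "hitting_time T Y x =
     (if \<exists>n\<ge>1. (T ^^ n) x \<in> Y then enat (LEAST n. n \<ge> 1 \<and> (T ^^ n) x \<in> Y) else \<infinity>)"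

definition tendsto_infinity_in_measure :: "'a measure \<Rightarrow> (nat \<Rightarrow> 'a \<Rightarrow> enat) \<Rightarrow> bool" where
  "tendsto_infinity_in_measure \<nu> f \<longleftrightarrow>
     (\<forall>N::nat. N \<ge> 1 \<longrightarrow> (\<lambda>k. measure \<nu> {x \<in> space \<nu>. f k x \<le> enat N}) \<longlonglongrightarrow> 0)"

definition abs_cont_prob :: "'a measure \<Rightarrow> 'a measure \<Rightarrow> bool" where
  "abs_cont_prob M \<nu> \<longleftrightarrow> prob_space \<nu> \<and> sets \<nu> = sets M \<and> absolutely_continuous M \<nu>"

end

theory Submission
  imports Defs
begin

text \<open>
  Write \<open>\<phi>\<^sub>k\<close> for the hitting time of \<open>E\<^sub>k\<close>. If \<open>\<mu>(E\<^sub>k) \<rightarrow> 0\<close>, then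
  \<open>\<mu>(\<phi>\<^sub>k \<le> N) \<le> N \<mu>(E\<^sub>k) \<rightarrow> 0\<close>, and both limits pass to any \<open>\<nu> \<ll> \<mu>\<close>: if \<open>f\<close> is the
  density of \<open>\<nu>\<close>, then \<open>\<nu>(B) \<le> \<nu>(f > c) + c \<mu>(B)\<close> and \<open>\<nu>(f > c) \<rightarrow> 0\<close> as \<open>c \<rightarrow> \<infinity>\<close>.

  Conversely, \<open>f \<ge> c > 0\<close> on a set \<open>A\<close> of positive measure, so
  \<open>c \<mu>(A \<inter> {\<phi>\<^sub>k \<le> m}) \<le> \<nu>(\<phi>\<^sub>k \<le> m)\<close>. By ergodicity the set \<open>W\<^sub>m\<close> of points visiting \<open>A\<close>
  before time \<open>m\<close> has measure tending to 1. A point of \<open>T\<^sup>-\<^sup>m E\<^sub>k \<inter> W\<^sub>m\<close> is mapped at some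
  time \<open>j < m\<close> into \<open>A \<inter> {\<phi>\<^sub>k \<le> m}\<close>, so by invariance of \<open>\<mu>\<close>
  \<open>\<mu>(E\<^sub>k) \<le> 1 - \<mu>(W\<^sub>m) + (m/c) \<nu>(\<phi>\<^sub>k \<le> m)\<close>; let first \<open>k\<close> and then \<open>m\<close> tend to \<open>\<infinity>\<close>.
\<close>

lemma LIMSEQ_0_by_vanishing_bounds:
  fixes a r :: "nat \<Rightarrow> real" and b :: "nat \<Rightarrow> nat \<Rightarrow> real"
  assumes "\<And>k. 0 \<le> a k" and "\<And>m k. a k \<le> r m + b m k"
    and "r \<longlonglongrightarrow> 0" and "\<And>m. b m \<longlonglongrightarrow> 0"
  shows "a \<longlonglongrightarrow> 0"
proof (rule tendstoI)
  fix e :: real assume "0 < e"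
  then have "eventually (\<lambda>m. r m < e / 2) sequentially"
    by (intro order_tendstoD(2)[OF assms(3)]) simp
  then obtain m where m: "r m < e / 2" by (auto simp: eventually_sequentially)
  have "eventually (\<lambda>k. b m k < e / 2) sequentially"
    using \<open>0 < e\<close> by (intro order_tendstoD(2)[OF assms(4)]) simp
  then show "eventually (\<lambda>k. dist (a k) 0 < e) sequentially"
  proof eventually_elim
    case (elim k)
    then show ?case using assms(1)[of k] assms(2)[of k m] m by simp
  qed
qed

lemma mpt_comp:
  assumes "mpt M S" "mpt M T"
  shows "mpt M (S \<circ> T)"
proof -
  have "S \<in> measurable M M" "T \<in> measurable M M" "distr M M S = M" "distr M M T = M"
    using assms unfolding mpt_def by auto
  then show ?thesis
    unfolding mpt_def using distr_distr[of S M M T M] by auto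
qed

lemma mpt_space: "mpt M T \<Longrightarrow> x \<in> space M \<Longrightarrow> T x \<in> space M"
  unfolding mpt_def by (blast intro: measurable_space)

lemma mpt_funpow:
  assumes "mpt M T"
  shows "mpt M (T ^^ n)"
proof (induction n)
  case 0
  then show ?case by (simp add: mpt_def id_def)
next
  case (Suc n)
  then show ?case using mpt_comp[OF assms Suc.IH] by (simp only: funpow.simps)
qed

lemma
  assumes "mpt M T" "S \<in> sets M"
  shows mpt_vimage_sets: "T -` S \<inter> space M \<in> sets M"
    and mpt_measure_vimage: "measure M (T -` S \<inter> space M) = measure M S"
proof -
  have T: "T \<in> measurable M M" "distr M M T = M" using assms(1) unfolding mpt_def by auto
  show "T -` S \<inter> space M \<in> sets M" using T(1) assms(2) by measurable
  show "measure M (T -` S \<inter> space M) = measure M S"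
    using measure_distr[OF T(1) assms(2)] T(2) by simp
qed

lemma hitting_time_le_enat_iff:
  "hitting_time T Y x \<le> enat N \<longleftrightarrow> (\<exists>n\<in>{1..N}. (T ^^ n) x \<in> Y)"
proof (cases "\<exists>n\<ge>1. (T ^^ n) x \<in> Y")
  case True
  let ?l = "LEAST n. n \<ge> 1 \<and> (T ^^ n) x \<in> Y"
  have "?l \<ge> 1 \<and> (T ^^ ?l) x \<in> Y" by (rule LeastI_ex) (use True in blast)
  then show ?thesis
    using True by (auto simp: hitting_time_def intro: le_trans[OF Least_le])
qed (auto simp: hitting_time_def)

lemma hitting_time_le_set:
  "{x \<in> space M. hitting_time T Y x \<le> enat N} = (\<Union>n\<in>{1..N}. (T ^^ n) -` Y \<inter> space M)"
  by (auto simp: hitting_time_le_enat_iff)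

lemma sets_hitting_time_le:
  assumes "mpt M T" "Y \<in> sets M"
  shows "{x \<in> space M. hitting_time T Y x \<le> enat N} \<in> sets M"
  unfolding hitting_time_le_set
  using mpt_vimage_sets[OF mpt_funpow[OF assms(1)] assms(2)] by (intro sets.finite_UN) auto

lemma measure_hitting_time_le:
  assumes "finite_measure M" "mpt M T" "Y \<in> sets M"
  shows "measure M {x \<in> space M. hitting_time T Y x \<le> enat N} \<le> N * measure M Y"
proof -
  interpret finite_measure M by fact
  have "measure M (\<Union>n\<in>{1..N}. (T ^^ n) -` Y \<inter> space M)
      \<le> (\<Sum>n\<in>{1..N}. measure M ((T ^^ n) -` Y \<inter> space M))"
    using mpt_vimage_sets[OF mpt_funpow[OF assms(2)] assms(3)]
    by (intro finite_measure_subadditive_finite) auto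
  then show ?thesis
    by (simp add: hitting_time_le_set mpt_measure_vimage[OF mpt_funpow[OF assms(2)] assms(3)])
qed

lemma abs_cont_prob_density:
  assumes "prob_space M" "abs_cont_prob M \<nu>"
  obtains f where "f \<in> borel_measurable M" "\<nu> = density M f"
proof -
  interpret prob_space M by fact
  have "absolutely_continuous M \<nu>" "sets \<nu> = sets M"
    using assms(2) unfolding abs_cont_prob_def by auto
  then obtain f where "f \<in> borel_measurable M" "density M f = \<nu>"
    using Radon_Nikodym by blast
  then show ?thesis using that by simp
qed

lemma emeasure_density_le_superlevel:
  assumes f: "f \<in> borel_measurable M" and B: "B \<in> sets M"
  shows "emeasure (density M f) B
         \<le> emeasure (density M f) {x \<in> space M. c < f x} + c * emeasure M B"
proof -
  have S: "{x \<in> space M. c < f x} \<in> sets M" using f by measurable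
  have "emeasure (density M f) B = (\<integral>\<^sup>+x. f x * indicator B x \<partial>M)"
    using f B by (rule emeasure_density)
  also have "\<dots> \<le> (\<integral>\<^sup>+x. f x * indicator {x \<in> space M. c < f x} x + c * indicator B x \<partial>M)"
  proof (intro nn_integral_mono)
    fix x assume "x \<in> space M"
    then show "f x * indicator B x \<le> f x * indicator {x \<in> space M. c < f x} x + c * indicator B x"
      by (cases "c < f x"; cases "x \<in> B") (simp_all add: not_less)
  qed
  also have "\<dots> = emeasure (density M f) {x \<in> space M. c < f x} + c * emeasure M B"
    using f B S by (simp add: nn_integral_add emeasure_density nn_integral_cmult_indicator)
  finally show ?thesis .
qed

lemma density_superlevel_tendsto_0:
  assumes f: "f \<in> borel_measurable M" and "finite_measure (density M f)"
  shows "(\<lambda>n. measure (density M f) {x \<in> space M. of_nat n < f x}) \<longlonglongrightarrow> 0"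
proof -
  interpret N: finite_measure "density M f" by fact
  define S where "S n = {x \<in> space M. of_nat n < f x}" for n :: nat
  have S_sets: "S n \<in> sets M" for n unfolding S_def using f by measurable
  have "integral\<^sup>N M f = (\<integral>\<^sup>+x. f x * indicator (space M) x \<partial>M)"
    by (intro nn_integral_cong) simp
  also have "\<dots> = emeasure (density M f) (space M)"
    by (rule emeasure_density[OF f sets.top, symmetric])
  finally have "integral\<^sup>N M f = emeasure (density M f) (space M)" .
  then have "AE x in M. f x \<noteq> \<infinity>"
    using N.emeasure_finite[of "space M"] by (intro nn_integral_PInf_AE[OF f]) simp
  then have "AE x in M. x \<in> (\<Inter>n. S n) \<longrightarrow> f x = 0"
  proof eventually_elim
    case (elim x)
    then have "f x < top" by (simp add: less_top[symmetric])
    then obtain n where "f x < of_nat n"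
      using ennreal_Ex_less_of_nat by blast
    then have "x \<notin> S n" by (simp add: S_def not_less order.strict_implies_order)
    then show ?case by blast
  qed
  then have "(\<Inter>n. S n) \<in> null_sets (density M f)"
    using S_sets by (subst null_sets_density_iff[OF f]) auto
  moreover have "(\<lambda>n. measure (density M f) (S n)) \<longlonglongrightarrow> measure (density M f) (\<Inter>n. S n)"
    using S_sets by (intro N.finite_Lim_measure_decseq)
      (auto simp: decseq_def S_def intro: order.strict_trans1[rotated])
  ultimately have "(\<lambda>n. measure (density M f) (S n)) \<longlonglongrightarrow> 0"
    by (simp add: measure_eq_0_null_sets)
  then show ?thesis unfolding S_def .
qed

lemma measure_density_tendsto_0:
  assumes "finite_measure M" and f: "f \<in> borel_measurable M" and "finite_measure (density M f)"
    and B: "\<And>k. B k \<in> sets M" and "(\<lambda>k. measure M (B k)) \<longlonglongrightarrow> 0"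
  shows "(\<lambda>k. measure (density M f) (B k)) \<longlonglongrightarrow> 0"
proof (rule LIMSEQ_0_by_vanishing_bounds
    [where r = "\<lambda>m. measure (density M f) {x \<in> space M. of_nat m < f x}"
      and b = "\<lambda>m k. real m * measure M (B k)"])
  interpret M: finite_measure M by fact
  interpret N: finite_measure "density M f" by fact
  fix m k
  have "ennreal (measure (density M f) (B k))
        \<le> ennreal (measure (density M f) {x \<in> space M. of_nat m < f x} + real m * measure M (B k))"
    using emeasure_density_le_superlevel[OF f B[of k], of "of_nat m"]
    by (simp add: N.emeasure_eq_measure M.emeasure_eq_measure ennreal_plus ennreal_mult
        ennreal_of_nat_eq_real_of_nat)
  then show "measure (density M f) (B k)
        \<le> measure (density M f) {x \<in> space M. of_nat m < f x} + real m * measure M (B k)"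
    by (metis ennreal_le_iff add_nonneg_nonneg measure_nonneg mult_nonneg_nonneg of_nat_0_le_iff)
next
  show "(\<lambda>m. measure (density M f) {x \<in> space M. of_nat m < f x}) \<longlonglongrightarrow> 0"
    using f assms(3) by (rule density_superlevel_tendsto_0)
next
  show "(\<lambda>k. real m * measure M (B k)) \<longlonglongrightarrow> 0" for m
    using assms(5) by (rule tendsto_mult_right_zero)
qed simp

lemma abs_cont_prob_tendsto_0:
  assumes "prob_space M" "abs_cont_prob M \<nu>"
    and "\<And>k. B k \<in> sets M" "(\<lambda>k. measure M (B k)) \<longlonglongrightarrow> 0"
  shows "(\<lambda>k. measure \<nu> (B k)) \<longlonglongrightarrow> 0"
proof -
  obtain f where f: "f \<in> borel_measurable M" "\<nu> = density M f"
    using abs_cont_prob_density[OF assms(1,2)] .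
  have "finite_measure M" "finite_measure \<nu>"
    using assms(1,2) by (auto simp: abs_cont_prob_def prob_space_def)
  then show ?thesis
    using measure_density_tendsto_0[OF _ f(1) _ assms(3,4)] f(2) by simp
qed

lemma density_nonzero_ex_superlevel:
  assumes f: "f \<in> borel_measurable M" and nonzero: "emeasure (density M f) (space M) \<noteq> 0"
  shows "\<exists>n. emeasure M {x \<in> space M. ennreal (1 / Suc n) \<le> f x} \<noteq> 0"
proof (rule ccontr)
  define A where "A n = {x \<in> space M. ennreal (1 / Suc n) \<le> f x}" for n :: nat
  have A_sets: "A n \<in> sets M" for n unfolding A_def using f by measurable
  assume "\<not> (\<exists>n. emeasure M {x \<in> space M. ennreal (1 / Suc n) \<le> f x} \<noteq> 0)"
  then have "(\<Union>n. A n) \<in> null_sets M" using A_sets unfolding A_def by auto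
  moreover have "{x \<in> space M. \<not> (x \<in> space M \<longrightarrow> f x = 0)} \<subseteq> (\<Union>n. A n)"
  proof
    fix x assume x: "x \<in> {x \<in> space M. \<not> (x \<in> space M \<longrightarrow> f x = 0)}"
    show "x \<in> (\<Union>n. A n)"
    proof (cases "f x")
      case (real r)
      with x have "0 < r" by auto
      then obtain n where "1 / Suc n < r" using nat_approx_posE by blast
      then have "ennreal (1 / Suc n) \<le> f x" using real by (simp add: ennreal_leI)
      then show ?thesis using x by (auto simp: A_def)
    next
      case top
      with x show ?thesis by (auto simp: A_def)
    qed
  qed
  ultimately have "AE x in M. x \<in> space M \<longrightarrow> f x = 0" by (rule AE_I')
  then have "space M \<in> null_sets (density M f)" by (simp add: null_sets_density_iff[OF f])
  with nonzero show False by auto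
qed

lemma density_lower_bound_on_set:
  assumes f: "f \<in> borel_measurable M" and "emeasure (density M f) (space M) \<noteq> 0"
  obtains A c where "A \<in> sets M" "emeasure M A \<noteq> 0" "0 < c"
    "\<And>B. B \<in> sets M \<Longrightarrow> ennreal c * emeasure M (A \<inter> B) \<le> emeasure (density M f) B"
proof -
  obtain n where n: "emeasure M {x \<in> space M. ennreal (1 / Suc n) \<le> f x} \<noteq> 0"
    using density_nonzero_ex_superlevel[OF assms] by blast
  define A where "A = {x \<in> space M. ennreal (1 / Suc n) \<le> f x}"
  have A_sets: "A \<in> sets M" unfolding A_def using f by measurable
  have bound: "ennreal (1 / Suc n) * emeasure M (A \<inter> B) \<le> emeasure (density M f) B"
    if B: "B \<in> sets M" for B
  proof -
    have "ennreal (1 / Suc n) * emeasure M (A \<inter> B)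
        = (\<integral>\<^sup>+x. ennreal (1 / Suc n) * indicator (A \<inter> B) x \<partial>M)"
      using A_sets B by (simp add: nn_integral_cmult_indicator)
    also have "\<dots> \<le> (\<integral>\<^sup>+x. f x * indicator B x \<partial>M)"
      by (intro nn_integral_mono) (auto simp: A_def indicator_def)
    also have "\<dots> = emeasure (density M f) B" using emeasure_density[OF f B] ..
    finally show ?thesis .
  qed
  show ?thesis by (rule that[OF A_sets n[folded A_def], of "1 / Suc n"]) (simp, rule bound)
qed

lemma abs_cont_prob_lower_bound_on_set:
  assumes "prob_space M" "abs_cont_prob M \<nu>"
  obtains A c where "A \<in> sets M" "measure M A \<noteq> 0" "0 < c"
    "\<And>B. B \<in> sets M \<Longrightarrow> c * measure M (A \<inter> B) \<le> measure \<nu> B"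
proof -
  interpret prob_space M by fact
  interpret N: prob_space \<nu> using assms(2) by (simp add: abs_cont_prob_def)
  obtain f where f: "f \<in> borel_measurable M" "\<nu> = density M f"
    using abs_cont_prob_density[OF assms] .
  have "emeasure (density M f) (space M) \<noteq> 0"
    using N.emeasure_space_1 f(2) by simp
  then obtain A c where A: "A \<in> sets M" "emeasure M A \<noteq> 0" "0 < c"
    and Ac: "\<And>B. B \<in> sets M \<Longrightarrow> ennreal c * emeasure M (A \<inter> B) \<le> emeasure \<nu> B"
    using density_lower_bound_on_set[OF f(1)] unfolding f(2) by blast
  have "c * measure M (A \<inter> B) \<le> measure \<nu> B" if "B \<in> sets M" for B
  proof -
    have "ennreal (c * measure M (A \<inter> B)) = ennreal c * emeasure M (A \<inter> B)"
      using A(3) by (simp add: emeasure_eq_measure ennreal_mult)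
    also have "\<dots> \<le> emeasure \<nu> B" by (rule Ac[OF that])
    also have "\<dots> = ennreal (measure \<nu> B)" by (rule N.emeasure_eq_measure)
    finally show ?thesis by (simp add: ennreal_le_iff)
  qed
  with A show ?thesis using that by (simp add: emeasure_eq_measure)
qed

lemma ergodic_subinvariant_measure:
  assumes "prob_space M" "ergodic_mpt M T" "S \<in> sets M"
    and sub: "T -` S \<inter> space M \<subseteq> S" and "measure M S \<noteq> 0"
  shows "measure M S = 1"
proof -
  interpret prob_space M by fact
  have mpt: "mpt M T" using assms(2) unfolding ergodic_mpt_def by blast
  define S' where "S' n = (T ^^ n) -` S \<inter> space M" for n
  have S'_sets: "S' n \<in> sets M" for n
    unfolding S'_def using mpt_vimage_sets[OF mpt_funpow[OF mpt] assms(3)] .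
  have S'_measure: "measure M (S' n) = measure M S" for n
    unfolding S'_def using mpt_measure_vimage[OF mpt_funpow[OF mpt] assms(3)] .
  have vimage_S': "T -` S' n \<inter> space M = S' (Suc n)" for n
    using mpt_space[OF mpt] by (auto simp: S'_def funpow_swap1)
  have S'_Suc: "S' (Suc n) \<subseteq> S' n" for n
    using sub mpt_space[OF mpt_funpow[OF mpt]] by (fastforce simp: S'_def)
  then have dec: "decseq S'" by (rule decseq_SucI)
  \<comment> \<open>Ergodicity only speaks about strictly invariant sets: pass from \<open>S\<close> to \<open>\<Inter>n. T\<^sup>-\<^sup>n S\<close>.\<close>
  define V where "V = (\<Inter>n. S' n)"
  have "V \<in> sets M" unfolding V_def using S'_sets by blast
  moreover have "T -` V \<inter> space M = V"
  proof -
    have "T -` V \<inter> space M = (\<Inter>n. S' (Suc n))"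
      unfolding V_def vimage_S'[symmetric] by blast
    also have "\<dots> = V"
    proof
      show "(\<Inter>n. S' (Suc n)) \<subseteq> V"
      proof (unfold V_def, intro subsetI INT_I)
        fix x n assume x: "x \<in> (\<Inter>n. S' (Suc n))"
        then show "x \<in> S' n" using S'_Suc[of 0] by (cases n) auto
      qed
    qed (auto simp: V_def)
    finally show ?thesis .
  qed
  moreover have "measure M V = measure M S"
  proof -
    have "(\<lambda>n. measure M (S' n)) \<longlonglongrightarrow> measure M V"
      unfolding V_def using S'_sets dec by (intro finite_Lim_measure_decseq) auto
    then show ?thesis by (simp add: S'_measure LIMSEQ_const_iff)
  qed
  ultimately show ?thesis using assms(2,5) unfolding ergodic_mpt_def by metis
qed

lemma ergodic_measure_visits_tendsto_1:
  assumes "prob_space M" "ergodic_mpt M T" "A \<in> sets M" "measure M A \<noteq> 0"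
  shows "(\<lambda>m. measure M (\<Union>j<m. (T ^^ j) -` A \<inter> space M)) \<longlonglongrightarrow> 1"
proof -
  interpret prob_space M by fact
  have mpt: "mpt M T" using assms(2) unfolding ergodic_mpt_def by blast
  define U where "U = (\<Union>j. (T ^^ j) -` A \<inter> space M)"
  have vimage_sets: "(T ^^ j) -` A \<inter> space M \<in> sets M" for j
    using mpt_vimage_sets[OF mpt_funpow[OF mpt] assms(3)] .
  have U_sets: "U \<in> sets M" unfolding U_def using vimage_sets by blast
  have "T -` U \<inter> space M \<subseteq> U"
  proof
    fix x assume x: "x \<in> T -` U \<inter> space M"
    then obtain j where "(T ^^ j) (T x) \<in> A" unfolding U_def by blast
    then have "(T ^^ Suc j) x \<in> A" by (simp add: funpow_swap1)
    then show "x \<in> U" using x unfolding U_def by blast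
  qed
  moreover have "measure M U \<noteq> 0"
  proof -
    have "A \<subseteq> U"
      unfolding U_def using sets.sets_into_space[OF assms(3)] by (intro subsetI UN_I[of 0]) auto
    then have "measure M A \<le> measure M U" using U_sets by (rule finite_measure_mono)
    then show ?thesis using assms(4) measure_nonneg[of M A] by linarith
  qed
  ultimately have "measure M U = 1"
    by (rule ergodic_subinvariant_measure[OF assms(1,2) U_sets])
  moreover have "(\<lambda>m. measure M (\<Union>j<m. (T ^^ j) -` A \<inter> space M)) \<longlonglongrightarrow> measure M U"
  proof -
    have "(\<Union>m. \<Union>j<m. (T ^^ j) -` A \<inter> space M) = U" unfolding U_def by blast
    moreover have "(\<lambda>m. measure M (\<Union>j<m. (T ^^ j) -` A \<inter> space M))
        \<longlonglongrightarrow> measure M (\<Union>m. \<Union>j<m. (T ^^ j) -` A \<inter> space M)"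
    proof (rule finite_Lim_measure_incseq)
      show "range (\<lambda>m. \<Union>j<m. (T ^^ j) -` A \<inter> space M) \<subseteq> sets M"
        using vimage_sets by blast
      show "incseq (\<lambda>m. \<Union>j<m. (T ^^ j) -` A \<inter> space M)"
        by (intro incseq_SucI UN_mono) auto
    qed
    ultimately show ?thesis by simp
  qed
  ultimately show ?thesis by simp
qed

lemma measure_le_by_visits_and_hitting_time:
  assumes "finite_measure M" "mpt M T" "Y \<in> sets M" "A \<in> sets M"
  shows "measure M Y \<le> measure M (space M - (\<Union>j<m. (T ^^ j) -` A \<inter> space M))
           + m * measure M (A \<inter> {x \<in> space M. hitting_time T Y x \<le> enat m})"
proof -
  interpret finite_measure M by fact
  define W where "W = (\<Union>j<m. (T ^^ j) -` A \<inter> space M)"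
  define H where "H = A \<inter> {x \<in> space M. hitting_time T Y x \<le> enat m}"
  have vimage_sets: "(T ^^ j) -` B \<inter> space M \<in> sets M" if "B \<in> sets M" for j B
    using mpt_vimage_sets[OF mpt_funpow[OF assms(2)] that] .
  have H_sets: "H \<in> sets M"
    unfolding H_def using assms(4) sets_hitting_time_le[OF assms(2,3)] by blast
  have W_sets: "W \<in> sets M" unfolding W_def using vimage_sets[OF assms(4)] by blast
  have cover: "(T ^^ m) -` Y \<inter> space M \<subseteq> (space M - W) \<union> (\<Union>j<m. (T ^^ j) -` H \<inter> space M)"
  proof
    fix x assume x: "x \<in> (T ^^ m) -` Y \<inter> space M"
    show "x \<in> (space M - W) \<union> (\<Union>j<m. (T ^^ j) -` H \<inter> space M)"
    proof (cases "x \<in> W")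
      case True
      then obtain j where j: "j < m" "(T ^^ j) x \<in> A" unfolding W_def by blast
      have "(T ^^ (m - j)) ((T ^^ j) x) = (T ^^ (m - j + j)) x"
        by (simp only: funpow_add comp_apply)
      also have "\<dots> = (T ^^ m) x" using j(1) by simp
      finally have "(T ^^ (m - j)) ((T ^^ j) x) \<in> Y" using x by simp
      then have "(T ^^ j) x \<in> H"
        using j x mpt_space[OF mpt_funpow[OF assms(2)]]
        by (auto simp: H_def hitting_time_le_enat_iff intro!: bexI[of _ "m - j"])
      then show ?thesis using j(1) x by blast
    qed (use x in blast)
  qed
  have "measure M Y = measure M ((T ^^ m) -` Y \<inter> space M)"
    using mpt_measure_vimage[OF mpt_funpow[OF assms(2)] assms(3)] by simp
  also have "\<dots> \<le> measure M ((space M - W) \<union> (\<Union>j<m. (T ^^ j) -` H \<inter> space M))"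
    using cover
  proof (rule finite_measure_mono)
    show "(space M - W) \<union> (\<Union>j<m. (T ^^ j) -` H \<inter> space M) \<in> sets M"
      using W_sets vimage_sets[OF H_sets] by blast
  qed
  also have "\<dots> \<le> measure M (space M - W) + (\<Sum>j<m. measure M ((T ^^ j) -` H \<inter> space M))"
  proof (rule order.trans[OF measure_Un_le add_left_mono])
    show "space M - W \<in> sets M" using W_sets by blast
    show "(\<Union>j<m. (T ^^ j) -` H \<inter> space M) \<in> sets M" using vimage_sets[OF H_sets] by blast
    show "measure M (\<Union>j<m. (T ^^ j) -` H \<inter> space M) \<le> (\<Sum>j<m. measure M ((T ^^ j) -` H \<inter> space M))"
      using vimage_sets[OF H_sets] by (intro finite_measure_subadditive_finite) blast+
  qed
  also have "\<dots> = measure M (space M - W) + m * measure M H"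
    using mpt_measure_vimage[OF mpt_funpow[OF assms(2)] H_sets] by simp
  finally show ?thesis unfolding W_def H_def .
qed

lemma hitting_time_tendsto_infinity_if_measure_tendsto_0:
  assumes "prob_space M" "mpt M T" "\<And>k. E k \<in> sets M" "abs_cont_prob M \<nu>"
    and "(\<lambda>k. measure M (E k)) \<longlonglongrightarrow> 0"
  shows "tendsto_infinity_in_measure \<nu> (\<lambda>k. hitting_time T (E k))"
  unfolding tendsto_infinity_in_measure_def
proof (intro allI impI)
  fix N :: nat
  have "space \<nu> = space M"
    using assms(4) unfolding abs_cont_prob_def by (metis sets_eq_imp_space_eq)
  have "finite_measure M" using assms(1) by (simp add: prob_space_def)
  have "(\<lambda>k. measure M {x \<in> space M. hitting_time T (E k) x \<le> enat N}) \<longlonglongrightarrow> 0"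
    using measure_hitting_time_le[OF \<open>finite_measure M\<close> assms(2,3)]
    by (intro tendsto_sandwich[OF _ _ tendsto_const tendsto_mult_right_zero[OF assms(5), of "real N"]]) auto
  then show "(\<lambda>k. measure \<nu> {x \<in> space \<nu>. hitting_time T (E k) x \<le> enat N}) \<longlonglongrightarrow> 0"
    unfolding \<open>space \<nu> = space M\<close>
    by (rule abs_cont_prob_tendsto_0[OF assms(1,4) sets_hitting_time_le[OF assms(2,3)]])
qed

lemma measure_tendsto_0_if_hitting_time_tendsto_infinity:
  assumes "prob_space M" "ergodic_mpt M T" "\<And>k. E k \<in> sets M" "abs_cont_prob M \<nu>"
    and hit: "tendsto_infinity_in_measure \<nu> (\<lambda>k. hitting_time T (E k))"
  shows "(\<lambda>k. measure M (E k)) \<longlonglongrightarrow> 0"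
proof -
  interpret prob_space M by fact
  have mpt: "mpt M T" using assms(2) unfolding ergodic_mpt_def by blast
  obtain A c where A: "A \<in> sets M" "measure M A \<noteq> 0" "0 < c"
    and Ac: "\<And>B. B \<in> sets M \<Longrightarrow> c * measure M (A \<inter> B) \<le> measure \<nu> B"
    using abs_cont_prob_lower_bound_on_set[OF assms(1,4)] by blast
  have space_\<nu>: "space \<nu> = space M"
    using assms(4) unfolding abs_cont_prob_def by (metis sets_eq_imp_space_eq)
  define H where "H k m = {x \<in> space M. hitting_time T (E k) x \<le> enat m}" for k m
  have H_bound: "measure M (A \<inter> H k m) \<le> measure \<nu> (H k m) / c" for k m
    using Ac[OF sets_hitting_time_le[OF mpt assms(3)]] A(3) unfolding H_def
    by (simp add: field_simps)
  define W where "W m = (\<Union>j<m. (T ^^ j) -` A \<inter> space M)" for m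
  have W_sets: "W m \<in> sets M" for m
    unfolding W_def using mpt_vimage_sets[OF mpt_funpow[OF mpt] A(1)] by blast
  show ?thesis
  proof (rule LIMSEQ_0_by_vanishing_bounds
      [where r = "\<lambda>m. measure M (space M - W m)" and b = "\<lambda>m k. m * (measure \<nu> (H k m) / c)"])
    fix m k
    have "measure M (E k) \<le> measure M (space M - W m) + m * measure M (A \<inter> H k m)"
      unfolding W_def H_def
      by (rule measure_le_by_visits_and_hitting_time[OF finite_measure_axioms mpt assms(3) A(1)])
    also have "\<dots> \<le> measure M (space M - W m) + m * (measure \<nu> (H k m) / c)"
      using mult_left_mono[OF H_bound[of k m], of "real m"] by simp
    finally show "measure M (E k) \<le> measure M (space M - W m) + m * (measure \<nu> (H k m) / c)" .
  next
    have "(\<lambda>m. measure M (W m)) \<longlonglongrightarrow> 1"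
      unfolding W_def by (rule ergodic_measure_visits_tendsto_1[OF assms(1,2) A(1,2)])
    then have "(\<lambda>m. 1 - measure M (W m)) \<longlonglongrightarrow> 1 - 1"
      by (intro tendsto_diff tendsto_const)
    then show "(\<lambda>m. measure M (space M - W m)) \<longlonglongrightarrow> 0"
      by (simp add: prob_compl[OF W_sets])
  next
    fix m
    show "(\<lambda>k. m * (measure \<nu> (H k m) / c)) \<longlonglongrightarrow> 0"
    proof (cases "m = 0")
      case False
      then have "1 \<le> m" by simp
      then have "(\<lambda>k. measure \<nu> (H k m)) \<longlonglongrightarrow> 0"
        using hit[unfolded tendsto_infinity_in_measure_def, rule_format, of m] space_\<nu>
        unfolding H_def by simp
      then show ?thesis by (intro tendsto_mult_right_zero tendsto_divide_zero)
    qed simp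
  qed simp
qed

theorem mainTheorem1:
  fixes M :: "'a measure" and T :: "'a \<Rightarrow> 'a" and E :: "nat \<Rightarrow> 'a set"
  assumes "prob_space M"
    and "ergodic_mpt M T"
    and "\<And>k. E k \<in> sets M"
    and "\<And>k. measure M (E k) > 0"
  shows "((\<lambda>k. measure M (E k)) \<longlonglongrightarrow> 0
          \<longleftrightarrow> (\<forall>\<nu>. abs_cont_prob M \<nu> \<longrightarrow> (\<lambda>k. measure \<nu> (E k)) \<longlonglongrightarrow> 0))
       \<and> ((\<lambda>k. measure M (E k)) \<longlonglongrightarrow> 0
          \<longleftrightarrow> tendsto_infinity_in_measure M (\<lambda>k. hitting_time T (E k)))
       \<and> ((\<lambda>k. measure M (E k)) \<longlonglongrightarrow> 0
          \<longleftrightarrow> (\<forall>\<nu>. abs_cont_prob M \<nu> \<longrightarrow>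
                 tendsto_infinity_in_measure \<nu> (\<lambda>k. hitting_time T (E k))))
       \<and> ((\<lambda>k. measure M (E k)) \<longlonglongrightarrow> 0
          \<longleftrightarrow> (\<exists>\<nu>. abs_cont_prob M \<nu> \<and>
                 tendsto_infinity_in_measure \<nu> (\<lambda>k. hitting_time T (E k))))"
proof -
  have mpt: "mpt M T" using assms(2) unfolding ergodic_mpt_def by blast
  have self: "abs_cont_prob M M"
    using assms(1) unfolding abs_cont_prob_def absolutely_continuous_def by blast
  let ?a = "(\<lambda>k. measure M (E k)) \<longlonglongrightarrow> 0"
  let ?hit = "\<lambda>\<nu>. tendsto_infinity_in_measure \<nu> (\<lambda>k. hitting_time T (E k))"
  have a_imp_b: "(\<lambda>k. measure \<nu> (E k)) \<longlonglongrightarrow> 0" if "abs_cont_prob M \<nu>" ?a for \<nu>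
    using abs_cont_prob_tendsto_0[OF assms(1) that(1) assms(3) that(2)] .
  have a_imp_d: "?hit \<nu>" if "abs_cont_prob M \<nu>" ?a for \<nu>
    using hitting_time_tendsto_infinity_if_measure_tendsto_0[OF assms(1) mpt assms(3) that] .
  have e_imp_a: ?a if "abs_cont_prob M \<nu>" "?hit \<nu>" for \<nu>
    using measure_tendsto_0_if_hitting_time_tendsto_infinity[OF assms(1,2,3) that] .
  have "?a \<longleftrightarrow> (\<forall>\<nu>. abs_cont_prob M \<nu> \<longrightarrow> (\<lambda>k. measure \<nu> (E k)) \<longlonglongrightarrow> 0)"
    using a_imp_b self by blast
  moreover have "?a \<longleftrightarrow> ?hit M"
    using a_imp_d e_imp_a self by blast
  moreover have "?a \<longleftrightarrow> (\<forall>\<nu>. abs_cont_prob M \<nu> \<longrightarrow> ?hit \<nu>)"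
    using a_imp_d e_imp_a self by blast
  moreover have "?a \<longleftrightarrow> (\<exists>\<nu>. abs_cont_prob M \<nu> \<and> ?hit \<nu>)"
    using a_imp_d e_imp_a self by blast
  ultimately show ?thesis by blast
qed

end
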